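(* Let $0<u<1$ and let $\delta_1,\ldots,\delta_n$ be independent random variables with $\mathbb{E}[\delta_k]=0$ and $|\delta_k|\le u$ for all $k$. Then for any $\delta\in(0,1)$, with probability at least $1-\delta$, \[ \max_{1\le k\le n}\left|\prod_{j=k+1}^n (1+\delta_j) - 1\right| \le \tilde\gamma_n(\delta), \qquad\text{where}\qquad \tilde\gamma_n(\delta) := \exp\!\left(\frac{\lambda(\delta)\sqrt{n}\,u + n u^2}{1-u}\right) - 1 . \]
   Context: For $\delta\in(0,1)$, $\lambda(\delta)=\sqrt{2\log(2/\delta)}$. An empty product equals $1$. *)

theory Defs
  imports "HOL-Probability.Probability"
begin

definition lam :: "real \<Rightarrow> real" where
  "lam d = sqrt (2 * ln (2 / d))"

definition gamma_tilde :: "nat \<Rightarrow> real \<Rightarrow> real \<Rightarrow> real" where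
  "gamma_tilde n u d = exp ((lam d * sqrt (real n) * u + real n * u\<^sup>2) / (1 - u)) - 1"

end

theory Submission
  imports Defs
begin

(* Write S_k = \<delta>_{k+1} + ... + \<delta>_n. Where |S_k| \<le> t, the tail product is exp (\<Sum> ln (1 + \<delta>_j))
   with |\<Sum> ln (1 + \<delta>_j)| \<le> (t + n u^2) / (1 - u), since |ln (1 + a) - a| \<le> u^2 / (1 - u).
   It remains to bound the probability that S_k \<ge> t (or -S_k \<ge> t) for some k, by a maximal
   form of the Chernoff bound: split that event according to the last k with S_k \<ge> t.
   Each piece depends only on \<delta>_{k+1}, ..., \<delta>_n, so multiplying by the independent factor
   exp (l (\<delta>_1 + ... + \<delta>_k)), whose expectation is at least 1, bounds its probability by
   e^(-l t) E [exp (l S_0); piece]. The pieces are disjoint, so the total is at most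
   e^(-l t) E exp (l S_0) \<le> exp (- l t + n l^2 u^2 / 2) by Hoeffding's lemma, and
   t = \<lambda>(\<delta>) \<surd>n u with l = t / (n u^2) makes this \<delta> / 2. *)

definition last_crossing :: "(nat \<Rightarrow> real) \<Rightarrow> nat \<Rightarrow> real \<Rightarrow> nat \<Rightarrow> bool" where
  "last_crossing s n t k \<longleftrightarrow> t \<le> s k \<and> (\<forall>m\<in>{k<..n}. s m < t)"

lemma last_crossing_cong:
  assumes "k \<le> n" "\<And>m. m \<in> {k..n} \<Longrightarrow> s m = s' m"
  shows "last_crossing s n t k = last_crossing s' n t k"
  using assms by (auto simp: last_crossing_def)

lemma last_crossing_exists:
  assumes "k \<in> {0..n}" "t \<le> s k"
  shows "\<exists>k\<in>{0..n}. last_crossing s n t k"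
proof -
  let ?K = "{k\<in>{0..n}. t \<le> s k}"
  have K: "finite ?K" "?K \<noteq> {}" using assms by auto
  have "Max ?K \<in> ?K" using Max_in[OF K] .
  moreover have "m \<le> Max ?K" if "m \<in> ?K" for m using Max_ge[OF K(1) that] .
  ultimately have "last_crossing s n t (Max ?K)"
    unfolding last_crossing_def by (auto simp: not_le[symmetric])
  with \<open>Max ?K \<in> ?K\<close> show ?thesis by auto
qed

lemma last_crossing_unique:
  assumes "last_crossing s n t k" "last_crossing s n t k'" "k \<le> n" "k' \<le> n"
  shows "k = k'"
  using assms unfolding last_crossing_def by (metis greaterThanAtMost_iff leD linorder_neqE_nat)

lemma sum_of_bool_last_crossing_le_one:
  "(\<Sum>k\<in>{0..n}. of_bool (last_crossing s n t k)) \<le> (1::real)"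
proof -
  have "card ({0..n} \<inter> {k. last_crossing s n t k}) \<le> Suc 0"
    by (subst card_le_Suc0_iff_eq) (auto intro: last_crossing_unique)
  then show ?thesis by simp
qed

lemma abs_exp_minus_one_le: "\<bar>exp L - 1\<bar> \<le> exp \<bar>L\<bar> - (1::real)"
proof (cases "L \<ge> 0")
  case False
  have "exp L \<le> 1" using False by simp
  then show ?thesis using exp_ge_add_one_self[of "-L"] exp_ge_add_one_self[of L] False by linarith
qed simp

lemma abs_ln_one_plus_minus_le:
  fixes a u :: real
  assumes "\<bar>a\<bar> \<le> u" "u < 1"
  shows "\<bar>ln (1 + a) - a\<bar> \<le> u\<^sup>2 / (1 - u)"
proof -
  have pos: "1 + a > 0" using assms by linarith
  have upper: "ln (1 + a) \<le> a" using ln_le_minus_one[OF pos] by simp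
  have "ln (1 / (1 + a)) \<le> 1 / (1 + a) - 1" using pos by (intro ln_le_minus_one) simp
  then have lower: "1 - 1 / (1 + a) \<le> ln (1 + a)" using pos by (simp add: ln_div)
  have "a - (1 - 1 / (1 + a)) = a\<^sup>2 / (1 + a)" using pos by (simp add: field_simps power2_eq_square)
  also have "\<dots> \<le> u\<^sup>2 / (1 - u)"
  proof (rule frac_le)
    show "a\<^sup>2 \<le> u\<^sup>2" using assms(1) by (metis abs_ge_zero power2_abs power_mono)
  qed (use assms pos in auto)
  finally show ?thesis using upper lower by linarith
qed

lemma abs_prod_one_plus_minus_one_le:
  fixes a :: "nat \<Rightarrow> real"
  assumes "finite J" "card J \<le> n" and a: "\<And>j. j \<in> J \<Longrightarrow> \<bar>a j\<bar> \<le> u" and "0 \<le> u" "u < 1"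
    and c: "\<bar>\<Sum>j\<in>J. a j\<bar> \<le> c"
  shows "\<bar>(\<Prod>j\<in>J. 1 + a j) - 1\<bar> \<le> exp ((c + real n * u\<^sup>2) / (1 - u)) - 1"
proof -
  define L where "L = (\<Sum>j\<in>J. ln (1 + a j))"
  have "(\<Prod>j\<in>J. 1 + a j) = exp L"
    unfolding L_def exp_sum[OF \<open>finite J\<close>] using a \<open>u < 1\<close>
    by (intro prod.cong refl) (smt (verit) exp_ln)
  moreover have "\<bar>L\<bar> \<le> (c + real n * u\<^sup>2) / (1 - u)"
  proof -
    have "\<bar>L\<bar> \<le> \<bar>\<Sum>j\<in>J. a j\<bar> + (\<Sum>j\<in>J. \<bar>ln (1 + a j) - a j\<bar>)"
      unfolding L_def using sum_abs[of "\<lambda>j. ln (1 + a j) - a j" J]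
      by (simp add: sum_subtractf)
    also have "\<dots> \<le> c + (\<Sum>j\<in>J. u\<^sup>2 / (1 - u))"
      using c a \<open>u < 1\<close> by (intro add_mono sum_mono abs_ln_one_plus_minus_le) auto
    also have "\<dots> \<le> c / (1 - u) + real n * u\<^sup>2 / (1 - u)"
    proof (intro add_mono)
      show "c \<le> c / (1 - u)"
        using assms by (simp add: le_divide_eq mult_left_le)
      show "(\<Sum>j\<in>J. u\<^sup>2 / (1 - u)) \<le> real n * u\<^sup>2 / (1 - u)"
        using assms by (simp add: divide_right_mono mult_right_mono)
    qed
    finally show ?thesis by (simp add: add_divide_distrib)
  qed
  ultimately show ?thesis using abs_exp_minus_one_le[of L] by (smt (verit) exp_le_cancel_iff)
qed

lemma power2_lam:
  assumes "0 < d" "d \<le> 2"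
  shows "(lam d)\<^sup>2 = 2 * ln (2 / d)"
  using assms unfolding lam_def by simp

lemma lam_pos:
  assumes "0 < d" "d < 2"
  shows "0 < lam d"
  using assms unfolding lam_def by (simp add: ln_gt_zero)

lemma exp_lam_exponent:
  assumes "0 < d" "d \<le> 2" "0 < u" "0 < n"
  shows "exp (- (lam d / (sqrt n * u)) * (lam d * sqrt n * u) + real n * (lam d / (sqrt n * u))\<^sup>2 * u\<^sup>2 / 2)
    = d / 2"
proof -
  have "- (lam d / (sqrt n * u)) * (lam d * sqrt n * u) + real n * (lam d / (sqrt n * u))\<^sup>2 * u\<^sup>2 / 2
      = - (lam d)\<^sup>2 / 2"
    using assms by (simp add: field_simps power2_eq_square)
  also have "\<dots> = - ln (2 / d)"
    using power2_lam[OF assms(1,2)] by simp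
  finally show ?thesis
    using assms by (simp add: ln_div exp_diff)
qed

lemma (in finite_measure) integrable_bounded_real:
  fixes f :: "'a \<Rightarrow> real"
  assumes "f \<in> borel_measurable M" "\<And>x. x \<in> space M \<Longrightarrow> \<bar>f x\<bar> \<le> B"
  shows "integrable M f"
  using assms by (intro integrable_const_bound[where B = B] AE_I2) auto

lemma (in finite_measure) integrable_exp_sum_mult:
  fixes X :: "'i \<Rightarrow> 'a \<Rightarrow> real"
  assumes "finite J" "\<And>j. j \<in> J \<Longrightarrow> X j \<in> borel_measurable M"
    and "\<And>j x. j \<in> J \<Longrightarrow> x \<in> space M \<Longrightarrow> \<bar>X j x\<bar> \<le> u"
    and "c \<in> borel_measurable M" "\<And>x. x \<in> space M \<Longrightarrow> \<bar>c x\<bar> \<le> 1"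
  shows "integrable M (\<lambda>x. exp (l * (\<Sum>j\<in>J. X j x)) * c x)"
proof (rule integrable_bounded_real)
  have "(\<lambda>x. \<Sum>j\<in>J. X j x) \<in> borel_measurable M"
    using assms(2) by (rule borel_measurable_sum)
  with assms(4) show "(\<lambda>x. exp (l * (\<Sum>j\<in>J. X j x)) * c x) \<in> borel_measurable M"
    by measurable
  fix x assume x: "x \<in> space M"
  have "l * (\<Sum>j\<in>J. X j x) \<le> \<bar>l\<bar> * (\<Sum>j\<in>J. \<bar>X j x\<bar>)"
  proof -
    have "l * (\<Sum>j\<in>J. X j x) \<le> \<bar>l * (\<Sum>j\<in>J. X j x)\<bar>" by (rule abs_ge_self)
    also have "\<dots> \<le> \<bar>l\<bar> * (\<Sum>j\<in>J. \<bar>X j x\<bar>)"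
      unfolding abs_mult by (intro mult_left_mono sum_abs) auto
    finally show ?thesis .
  qed
  also have "\<dots> \<le> \<bar>l\<bar> * (\<Sum>j\<in>J. u)"
    using assms(3) x by (intro mult_left_mono sum_mono) auto
  finally have "exp (l * (\<Sum>j\<in>J. X j x)) \<le> exp (\<bar>l\<bar> * (\<Sum>j\<in>J. u))" by simp
  moreover have "\<bar>exp (l * (\<Sum>j\<in>J. X j x)) * c x\<bar> \<le> exp (l * (\<Sum>j\<in>J. X j x))"
    using assms(5)[OF x] by (simp add: abs_mult mult_left_le)
  ultimately show "\<bar>exp (l * (\<Sum>j\<in>J. X j x)) * c x\<bar> \<le> exp (\<bar>l\<bar> * (\<Sum>j\<in>J. u))"
    by linarith
qed

lemma (in prob_space) one_le_expectation_exp_sum: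
  fixes X :: "'i \<Rightarrow> 'a \<Rightarrow> real"
  assumes "finite J" "\<And>j. j \<in> J \<Longrightarrow> X j \<in> borel_measurable M"
    and "\<And>j x. j \<in> J \<Longrightarrow> x \<in> space M \<Longrightarrow> \<bar>X j x\<bar> \<le> u"
    and "\<And>j. j \<in> J \<Longrightarrow> expectation (X j) = 0"
  shows "1 \<le> expectation (\<lambda>x. exp (l * (\<Sum>j\<in>J. X j x)))"
proof -
  have int_X: "integrable M (X j)" if "j \<in> J" for j
    using assms that by (intro integrable_bounded_real) auto
  have int_sum: "integrable M (\<lambda>x. 1 + l * (\<Sum>j\<in>J. X j x))"
    using int_X by (intro Bochner_Integration.integrable_add integrable_mult_right
        Bochner_Integration.integrable_sum) auto
  have "1 = expectation (\<lambda>x. 1 + l * (\<Sum>j\<in>J. X j x))"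
    using int_X assms(4) by (simp add: prob_space Bochner_Integration.integral_sum)
  also have "\<dots> \<le> expectation (\<lambda>x. exp (l * (\<Sum>j\<in>J. X j x)))"
    using integrable_exp_sum_mult[of J X u "\<lambda>_. 1" l] assms
    by (intro integral_mono int_sum) auto
  finally show ?thesis .
qed

lemma (in prob_space) indep_var_restrict_compose:
  assumes "indep_vars (\<lambda>_. N) X I" "A \<inter> B = {}" "A \<subseteq> I" "B \<subseteq> I"
    and "F \<in> borel_measurable (PiM A (\<lambda>_. N))" "G \<in> borel_measurable (PiM B (\<lambda>_. N))"
  shows "indep_var borel (\<lambda>x. F (restrict (\<lambda>i. X i x) A)) borel (\<lambda>x. G (restrict (\<lambda>i. X i x) B))"
  using indep_var_compose[OF indep_var_restrict[OF assms(1-4)] assms(5,6)] by (simp add: comp_def)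

lemma (in prob_space) expectation_exp_sum_le:
  fixes X :: "'i \<Rightarrow> 'a \<Rightarrow> real"
  assumes "finite I" and indep: "indep_vars (\<lambda>_. borel) X I"
    and E0: "\<And>i. i \<in> I \<Longrightarrow> expectation (X i) = 0"
    and bnd: "\<And>i x. i \<in> I \<Longrightarrow> x \<in> space M \<Longrightarrow> \<bar>X i x\<bar> \<le> u" and "l > 0"
  shows "expectation (\<lambda>x. exp (l * (\<Sum>i\<in>I. X i x))) \<le> exp (real (card I) * l\<^sup>2 * u\<^sup>2 / 2)"
proof -
  have rv[measurable]: "X i \<in> borel_measurable M" if "i \<in> I" for i
    using indep that unfolding indep_vars_def by auto
  have int: "integrable M (\<lambda>x. exp (l * X i x))" if "i \<in> I" for i
    using integrable_exp_sum_mult[of "{i}" X u "\<lambda>_. 1" l] that bnd by simp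
  have indep_exp: "indep_vars (\<lambda>_. borel) (\<lambda>i x. exp (l * X i x)) I"
    by (rule indep_vars_compose2[OF indep]) measurable
  have "expectation (\<lambda>x. exp (l * (\<Sum>i\<in>I. X i x))) = (\<Prod>i\<in>I. expectation (\<lambda>x. exp (l * X i x)))"
    unfolding sum_distrib_left exp_sum[OF \<open>finite I\<close>]
    by (rule indep_vars_lebesgue_integral[OF \<open>finite I\<close> indep_exp int])
  also have "\<dots> \<le> (\<Prod>i\<in>I. exp (l\<^sup>2 * u\<^sup>2 / 2))"
  proof (rule prod_mono)
    fix i assume i: "i \<in> I"
    interpret interval_bounded_random_variable M "X i" "-u" u
    proof
      show "random_variable borel (X i)" using i by (rule rv)
      show "AE x in M. X i x \<in> {-u..u}" using bnd[OF i] by (intro AE_I2) (simp add: abs_le_iff minus_le_iff)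
    qed
    have "ennreal (expectation (\<lambda>x. exp (l * X i x))) \<le> ennreal (exp (l\<^sup>2 * (u - - u)\<^sup>2 / 8))"
      using Hoeffdings_lemma_nn_integral_0[OF \<open>l > 0\<close> E0[OF i]]
      by (simp add: nn_integral_eq_integral[OF int[OF i]])
    then show "0 \<le> expectation (\<lambda>x. exp (l * X i x)) \<and> expectation (\<lambda>x. exp (l * X i x)) \<le> exp (l\<^sup>2 * u\<^sup>2 / 2)"
      by (simp add: power2_eq_square mult.assoc)
  qed
  also have "\<dots> = exp (real (card I) * l\<^sup>2 * u\<^sup>2 / 2)"
    by (simp add: exp_of_nat_mult[symmetric] mult.assoc)
  finally show ?thesis .
qed

lemma (in prob_space) indep_var_last_crossing_head:
  fixes X :: "nat \<Rightarrow> 'a \<Rightarrow> real"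
  assumes indep: "indep_vars (\<lambda>_. borel) X {1..n}" and "k \<le> n"
  shows "indep_var
    borel (\<lambda>x. exp (l * (\<Sum>j\<in>{k+1..n}. X j x)) *
               of_bool (last_crossing (\<lambda>m. \<Sum>j\<in>{m+1..n}. X j x) n t k))
    borel (\<lambda>x. exp (l * (\<Sum>j\<in>{1..k}. X j x)))"
proof -
  let ?F = "\<lambda>f. exp (l * (\<Sum>j\<in>{k+1..n}. f j)) * of_bool (last_crossing (\<lambda>m. \<Sum>j\<in>{m+1..n}. f j) n t k)"
  let ?G = "\<lambda>f. exp (l * (\<Sum>j\<in>{1..k}. f j))"
  have "?F \<in> borel_measurable (PiM {k+1..n} (\<lambda>_. borel))"
    unfolding last_crossing_def by measurable
  moreover have "?G \<in> borel_measurable (PiM {1..k} (\<lambda>_. borel))"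
    by measurable
  ultimately have "indep_var borel (\<lambda>x. ?F (restrict (\<lambda>j. X j x) {k+1..n}))
                             borel (\<lambda>x. ?G (restrict (\<lambda>j. X j x) {1..k}))"
    using \<open>k \<le> n\<close> by (intro indep_var_restrict_compose[OF indep]) auto
  moreover have "last_crossing (\<lambda>m. \<Sum>j\<in>{m+1..n}. restrict (\<lambda>j. X j x) {k+1..n} j) n t k
      = last_crossing (\<lambda>m. \<Sum>j\<in>{m+1..n}. X j x) n t k" for x
    by (rule last_crossing_cong[OF \<open>k \<le> n\<close>]) (auto intro!: sum.cong)
  ultimately show ?thesis by simp
qed

lemma (in prob_space) exp_mult_prob_last_crossing_le:
  fixes X :: "nat \<Rightarrow> 'a \<Rightarrow> real"
  assumes indep: "indep_vars (\<lambda>_. borel) X {1..n}"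
    and E0: "\<And>j. j \<in> {1..n} \<Longrightarrow> expectation (X j) = 0"
    and bnd: "\<And>j x. j \<in> {1..n} \<Longrightarrow> x \<in> space M \<Longrightarrow> \<bar>X j x\<bar> \<le> u"
    and "k \<le> n" "0 < l"
  shows "exp (l * t) * prob {x \<in> space M. last_crossing (\<lambda>m. \<Sum>j\<in>{m+1..n}. X j x) n t k}
    \<le> expectation (\<lambda>x. exp (l * (\<Sum>j\<in>{1..n}. X j x)) *
                         of_bool (last_crossing (\<lambda>m. \<Sum>j\<in>{m+1..n}. X j x) n t k))"
proof -
  have [measurable]: "X j \<in> borel_measurable M" if "j \<in> {1..n}" for j
    using indep that unfolding indep_vars_def by auto
  define C :: "'a \<Rightarrow> real" where "C x = of_bool (last_crossing (\<lambda>m. \<Sum>j\<in>{m+1..n}. X j x) n t k)" for x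
  define S where "S x = (\<Sum>j\<in>{k+1..n}. X j x)" for x
  define R where "R x = (\<Sum>j\<in>{1..k}. X j x)" for x
  have [measurable]: "C \<in> borel_measurable M"
    unfolding C_def last_crossing_def by measurable
  have C_le: "\<bar>C x\<bar> \<le> 1" for x
    by (simp add: C_def)
  have int_S: "integrable M (\<lambda>x. exp (l * S x) * C x)"
    unfolding S_def using \<open>k \<le> n\<close> by (intro integrable_exp_sum_mult C_le) (auto intro: bnd)
  have int_R: "integrable M (\<lambda>x. exp (l * R x))"
    using integrable_exp_sum_mult[of "{1..k}" X u "\<lambda>_. 1" l] \<open>k \<le> n\<close> bnd by (simp add: R_def)
  have indep_SR: "indep_var borel (\<lambda>x. exp (l * S x) * C x) borel (\<lambda>x. exp (l * R x))"
    unfolding S_def C_def R_def by (rule indep_var_last_crossing_head[OF indep \<open>k \<le> n\<close>])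
  have one_le_R: "1 \<le> expectation (\<lambda>x. exp (l * R x))"
    unfolding R_def using \<open>k \<le> n\<close> bnd E0 by (intro one_le_expectation_exp_sum[where u = u]) auto
  have int_C: "integrable M C"
    using C_le by (intro integrable_bounded_real) auto
  have "prob {x \<in> space M. last_crossing (\<lambda>m. \<Sum>j\<in>{m+1..n}. X j x) n t k}
      = expectation (indicator {x \<in> space M. last_crossing (\<lambda>m. \<Sum>j\<in>{m+1..n}. X j x) n t k})"
    unfolding last_crossing_def by (simp add: Int_absorb2)
  also have "\<dots> = expectation C"
    by (intro Bochner_Integration.integral_cong) (auto simp: C_def)
  finally have "exp (l * t) * prob {x \<in> space M. last_crossing (\<lambda>m. \<Sum>j\<in>{m+1..n}. X j x) n t k}
      = expectation (\<lambda>x. exp (l * t) * C x)"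
    by simp
  also have "\<dots> \<le> expectation (\<lambda>x. exp (l * S x) * C x)"
    by (intro integral_mono int_S integrable_mult_right int_C) (auto simp: C_def last_crossing_def S_def \<open>0 < l\<close>)
  also have "\<dots> \<le> expectation (\<lambda>x. exp (l * S x) * C x) * expectation (\<lambda>x. exp (l * R x))"
  proof -
    have "0 \<le> expectation (\<lambda>x. exp (l * S x) * C x)"
      by (intro Bochner_Integration.integral_nonneg) (simp add: C_def)
    then show ?thesis using one_le_R by (simp add: mult_le_cancel_left1)
  qed
  also have "\<dots> = expectation (\<lambda>x. exp (l * S x) * C x * exp (l * R x))"
    by (rule indep_var_lebesgue_integral[symmetric, OF indep_SR int_S int_R])
  also have "\<dots> = expectation (\<lambda>x. exp (l * (\<Sum>j\<in>{1..n}. X j x)) * C x)"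
  proof -
    have "{1..n} = {1..k} \<union> {k+1..n}" using \<open>k \<le> n\<close> by auto
    then have "(\<Sum>j\<in>{1..n}. X j x) = R x + S x" for x
      unfolding R_def S_def by (simp add: sum.union_disjoint ivl_disj_int)
    then show ?thesis by (simp add: distrib_left exp_add mult_ac)
  qed
  finally show ?thesis unfolding C_def by simp
qed

lemma (in prob_space) prob_tail_sum_ge_le_sum_last_crossing:
  fixes X :: "nat \<Rightarrow> 'a \<Rightarrow> real"
  assumes "\<And>j. j \<in> {1..n} \<Longrightarrow> X j \<in> borel_measurable M"
  shows "prob {x \<in> space M. \<exists>k\<in>{0..n}. t \<le> (\<Sum>j\<in>{k+1..n}. X j x)}
    \<le> (\<Sum>k\<in>{0..n}. prob {x \<in> space M. last_crossing (\<lambda>m. \<Sum>j\<in>{m+1..n}. X j x) n t k})"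
proof -
  have [measurable]: "X j \<in> borel_measurable M" if "j \<in> {1..n}" for j
    using assms that .
  have "{x \<in> space M. \<exists>k\<in>{0..n}. t \<le> (\<Sum>j\<in>{k+1..n}. X j x)}
      \<subseteq> (\<Union>k\<in>{0..n}. {x \<in> space M. last_crossing (\<lambda>m. \<Sum>j\<in>{m+1..n}. X j x) n t k})"
    by (auto dest: last_crossing_exists)
  then show ?thesis
    unfolding last_crossing_def
    by (intro order.trans[OF finite_measure_mono finite_measure_subadditive_finite]) auto
qed

lemma (in prob_space) prob_tail_sum_ge_le:
  fixes X :: "nat \<Rightarrow> 'a \<Rightarrow> real"
  assumes indep: "indep_vars (\<lambda>_. borel) X {1..n}"
    and E0: "\<And>j. j \<in> {1..n} \<Longrightarrow> expectation (X j) = 0"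
    and bnd: "\<And>j x. j \<in> {1..n} \<Longrightarrow> x \<in> space M \<Longrightarrow> \<bar>X j x\<bar> \<le> u"
    and "0 < l"
  shows "prob {x \<in> space M. \<exists>k\<in>{0..n}. t \<le> (\<Sum>j\<in>{k+1..n}. X j x)}
    \<le> exp (- l * t + real n * l\<^sup>2 * u\<^sup>2 / 2)"
proof -
  have [measurable]: "X j \<in> borel_measurable M" if "j \<in> {1..n}" for j
    using indep that unfolding indep_vars_def by auto
  define T where "T x = (\<Sum>j\<in>{1..n}. X j x)" for x
  define crossing where "crossing k x \<longleftrightarrow> last_crossing (\<lambda>m. \<Sum>j\<in>{m+1..n}. X j x) n t k" for k x
  have [measurable]: "Measurable.pred M (crossing k)" for k
    unfolding crossing_def last_crossing_def by measurable
  have int_T: "integrable M (\<lambda>x. exp (l * T x) * c x)"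
    if "c \<in> borel_measurable M" "\<And>x. \<bar>c x\<bar> \<le> 1" for c
    unfolding T_def using that bnd by (intro integrable_exp_sum_mult) auto
  have "prob {x \<in> space M. \<exists>k\<in>{0..n}. t \<le> (\<Sum>j\<in>{k+1..n}. X j x)}
      \<le> (\<Sum>k\<in>{0..n}. prob {x \<in> space M. crossing k x})"
    unfolding crossing_def by (rule prob_tail_sum_ge_le_sum_last_crossing) simp
  then have "exp (l * t) * prob {x \<in> space M. \<exists>k\<in>{0..n}. t \<le> (\<Sum>j\<in>{k+1..n}. X j x)}
      \<le> (\<Sum>k\<in>{0..n}. exp (l * t) * prob {x \<in> space M. crossing k x})"
    unfolding sum_distrib_left[symmetric] by (rule mult_left_mono) auto
  also have "\<dots> \<le> (\<Sum>k\<in>{0..n}. expectation (\<lambda>x. exp (l * T x) * of_bool (crossing k x)))"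
    unfolding T_def crossing_def
    by (intro sum_mono exp_mult_prob_last_crossing_le[OF indep E0 bnd] \<open>0 < l\<close>) auto
  also have "\<dots> = expectation (\<lambda>x. exp (l * T x) * (\<Sum>k\<in>{0..n}. of_bool (crossing k x)))"
    unfolding sum_distrib_left
    by (rule Bochner_Integration.integral_sum[symmetric]) (auto intro!: int_T)
  also have "\<dots> \<le> expectation (\<lambda>x. exp (l * T x))"
  proof (intro integral_mono)
    have "0 \<le> (\<Sum>k\<in>{0..n}. of_bool (crossing k x) :: real)" for x
      by (intro sum_nonneg) simp
    moreover have "(\<Sum>k\<in>{0..n}. of_bool (crossing k x)) \<le> (1::real)" for x
      unfolding crossing_def by (rule sum_of_bool_last_crossing_le_one)
    ultimately show "integrable M (\<lambda>x. exp (l * T x) * (\<Sum>k\<in>{0..n}. of_bool (crossing k x)))"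
      and "exp (l * T x) * (\<Sum>k\<in>{0..n}. of_bool (crossing k x)) \<le> exp (l * T x)" for x
      by (auto intro!: int_T mult_left_le simp del: sum_of_bool_eq)
    show "integrable M (\<lambda>x. exp (l * T x))"
      using int_T[of "\<lambda>_. 1"] by simp
  qed
  also have "\<dots> \<le> exp (real n * l\<^sup>2 * u\<^sup>2 / 2)"
    using expectation_exp_sum_le[OF _ indep E0 bnd \<open>0 < l\<close>] by (simp add: T_def)
  finally have "prob {x \<in> space M. \<exists>k\<in>{0..n}. t \<le> (\<Sum>j\<in>{k+1..n}. X j x)}
      \<le> exp (real n * l\<^sup>2 * u\<^sup>2 / 2) / exp (l * t)"
    by (subst pos_le_divide_eq[OF exp_gt_zero]) (simp only: mult.commute)
  also have "\<dots> = exp (- l * t + real n * l\<^sup>2 * u\<^sup>2 / 2)"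
    by (simp add: exp_diff[symmetric])
  finally show ?thesis .
qed

lemma (in prob_space) prob_abs_tail_sum_ge_le:
  fixes X :: "nat \<Rightarrow> 'a \<Rightarrow> real"
  assumes indep: "indep_vars (\<lambda>_. borel) X {1..n}"
    and E0: "\<And>j. j \<in> {1..n} \<Longrightarrow> expectation (X j) = 0"
    and bnd: "\<And>j x. j \<in> {1..n} \<Longrightarrow> x \<in> space M \<Longrightarrow> \<bar>X j x\<bar> \<le> u"
    and "0 < l"
  shows "prob {x \<in> space M. \<exists>k\<in>{0..n}. t \<le> \<bar>\<Sum>j\<in>{k+1..n}. X j x\<bar>}
    \<le> 2 * exp (- l * t + real n * l\<^sup>2 * u\<^sup>2 / 2)"
proof -
  have [measurable]: "X j \<in> borel_measurable M" if "j \<in> {1..n}" for j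
    using indep that unfolding indep_vars_def by auto
  have indep_neg: "indep_vars (\<lambda>_. borel) (\<lambda>j x. - X j x) {1..n}"
    by (rule indep_vars_compose2[OF indep]) measurable
  have "{x \<in> space M. \<exists>k\<in>{0..n}. t \<le> \<bar>\<Sum>j\<in>{k+1..n}. X j x\<bar>}
      \<subseteq> {x \<in> space M. \<exists>k\<in>{0..n}. t \<le> (\<Sum>j\<in>{k+1..n}. X j x)}
        \<union> {x \<in> space M. \<exists>k\<in>{0..n}. t \<le> (\<Sum>j\<in>{k+1..n}. - X j x)}"
  proof
    fix x assume "x \<in> {x \<in> space M. \<exists>k\<in>{0..n}. t \<le> \<bar>\<Sum>j\<in>{k+1..n}. X j x\<bar>}"
    then obtain k where "x \<in> space M" "k \<in> {0..n}" "t \<le> \<bar>\<Sum>j\<in>{k+1..n}. X j x\<bar>" by blast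
    moreover from this have "t \<le> (\<Sum>j\<in>{k+1..n}. X j x) \<or> t \<le> (\<Sum>j\<in>{k+1..n}. - X j x)"
      by (simp add: sum_negf) linarith
    ultimately show "x \<in> {x \<in> space M. \<exists>k\<in>{0..n}. t \<le> (\<Sum>j\<in>{k+1..n}. X j x)}
        \<union> {x \<in> space M. \<exists>k\<in>{0..n}. t \<le> (\<Sum>j\<in>{k+1..n}. - X j x)}"
      by blast
  qed
  then have "prob {x \<in> space M. \<exists>k\<in>{0..n}. t \<le> \<bar>\<Sum>j\<in>{k+1..n}. X j x\<bar>}
      \<le> prob {x \<in> space M. \<exists>k\<in>{0..n}. t \<le> (\<Sum>j\<in>{k+1..n}. X j x)}
        + prob {x \<in> space M. \<exists>k\<in>{0..n}. t \<le> (\<Sum>j\<in>{k+1..n}. - X j x)}"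
    by (intro order.trans[OF finite_measure_mono measure_subadditive]) auto
  also have "\<dots> \<le> 2 * exp (- l * t + real n * l\<^sup>2 * u\<^sup>2 / 2)"
    using prob_tail_sum_ge_le[OF indep E0 bnd \<open>0 < l\<close>, of t]
      prob_tail_sum_ge_le[OF indep_neg _ _ \<open>0 < l\<close>, of u t] E0 bnd
    by simp
  finally show ?thesis .
qed

lemma (in prob_space) prob_tail_prods_near_one_ge:
  fixes X :: "nat \<Rightarrow> 'a \<Rightarrow> real"
  assumes indep: "indep_vars (\<lambda>_. borel) X {1..n}"
    and E0: "\<And>j. j \<in> {1..n} \<Longrightarrow> expectation (X j) = 0"
    and bnd: "\<And>j x. j \<in> {1..n} \<Longrightarrow> x \<in> space M \<Longrightarrow> \<bar>X j x\<bar> \<le> u"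
    and "0 \<le> u" "u < 1" "0 < l"
  shows "1 - 2 * exp (- l * t + real n * l\<^sup>2 * u\<^sup>2 / 2) \<le> prob {x \<in> space M. \<forall>k\<in>{1..n}.
    \<bar>(\<Prod>j\<in>{k+1..n}. 1 + X j x) - 1\<bar> \<le> exp ((t + real n * u\<^sup>2) / (1 - u)) - 1}"
    (is "_ \<le> prob ?good")
proof -
  have [measurable]: "X j \<in> borel_measurable M" if "j \<in> {1..n}" for j
    using indep that unfolding indep_vars_def by auto
  define bad where "bad = {x \<in> space M. \<exists>k\<in>{0..n}. t \<le> \<bar>\<Sum>j\<in>{k+1..n}. X j x\<bar>}"
  have [measurable]: "bad \<in> sets M" "?good \<in> sets M"
    unfolding bad_def by measurable
  have "space M - bad \<subseteq> ?good"
  proof (intro subsetI CollectI conjI ballI)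
    fix x k assume x: "x \<in> space M - bad" and k: "k \<in> {1..n}"
    then have "\<bar>\<Sum>j\<in>{k+1..n}. X j x\<bar> \<le> t"
      unfolding bad_def by (auto simp: not_le less_imp_le)
    then show "\<bar>(\<Prod>j\<in>{k+1..n}. 1 + X j x) - 1\<bar> \<le> exp ((t + real n * u\<^sup>2) / (1 - u)) - 1"
      using x k bnd assms(4,5) by (intro abs_prod_one_plus_minus_one_le) auto
  qed (simp add: Diff_iff)
  then have "1 - prob bad \<le> prob ?good"
    using finite_measure_mono[of "space M - bad" ?good] prob_compl[of bad] by simp
  then show ?thesis
    using prob_abs_tail_sum_ge_le[OF indep E0 bnd \<open>0 < l\<close>, of t] by (simp add: bad_def)
qed

theorem lemma3p2:
  fixes M :: "'a measure" and \<delta>s :: "nat \<Rightarrow> 'a \<Rightarrow> real"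
    and u d :: real and n :: nat
  assumes "prob_space M"
    and "0 < u" and "u < 1"
    and "prob_space.indep_vars M (\<lambda>_. borel) \<delta>s {1..n}"
    and "\<And>k. k \<in> {1..n} \<Longrightarrow> integrable M (\<delta>s k)"
    and "\<And>k. k \<in> {1..n} \<Longrightarrow> prob_space.expectation M (\<delta>s k) = 0"
    and "\<And>k x. k \<in> {1..n} \<Longrightarrow> x \<in> space M \<Longrightarrow> \<bar>\<delta>s k x\<bar> \<le> u"
    and "0 < d" and "d < 1"
  shows "measure M {x \<in> space M. \<forall>k\<in>{1..n}.
            \<bar>(\<Prod>j\<in>{k+1..n}. 1 + \<delta>s j x) - 1\<bar> \<le> gamma_tilde n u d} \<ge> 1 - d"
proof -
  interpret prob_space M by fact
  show ?thesis
  proof (cases "n = 0")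
    case True
    then show ?thesis using \<open>0 < d\<close> by (simp add: prob_space)
  next
    case False
    have "0 < lam d / (sqrt n * u)"
      using lam_pos[of d] \<open>0 < d\<close> \<open>d < 1\<close> \<open>0 < u\<close> False by simp
    from prob_tail_prods_near_one_ge[OF assms(4,6,7) _ \<open>u < 1\<close> this, of "lam d * sqrt n * u"]
    show ?thesis
      using exp_lam_exponent[of d u n] \<open>0 < d\<close> \<open>d < 1\<close> \<open>0 < u\<close> False
      by (simp add: gamma_tilde_def)
  qed
qed

end
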